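(* Let $\mathbf F\in\mathcal F_d^0$ with densities $\mathbf f_1,\dots,\mathbf f_d$, and let $\delta^{\mathbf F}=(\delta_{(1)},\dots,\delta_{(d)})$. Then for $\prod_{i=1}^d\mathbf f_i(x_i)\,dx_1\cdots dx_d$-almost every $x\in\mathbb R^d$, $$\mathbf 1_{T^{\mathbf F}}\big(\mathbf F_1(x_1),\dots,\mathbf F_d(x_d)\big)\;\mathbf 1_{L_{\delta^{\mathbf F}}}\big(\delta_{(1)}^{-1}\circ\mathbf F_1(x_1),\dots,\delta_{(d)}^{-1}\circ\mathbf F_d(x_d)\big)=\mathbf 1_{L^{\mathbf F}}(x).$$
   Context: $I=[0,1]$. Generalized inverse $J^{-1}(t)=\inf\{s\in\mathbb R:J(s)\ge t\}$. $\mathcal F_d$: $d$-tuples $\mathbf F=(\mathbf F_1,\dots,\mathbf F_d)$ of continuous cdf's on $\mathbb R$ with $\mathbf F_{i-1}\ge\mathbf F_i$; $\mathcal F_d^0$: those $\mathbf F$ for which there is an absolutely continuous cdf of a random vector $X$ with $X_1\le\dots\le X_d$ a.s. and $X_i\sim\mathbf F_i$. $G=\frac1d\sum\mathbf F_i$, $\delta_{(i)}=\mathbf F_i\circ G^{-1}$. $T^{\mathbf F}=\{u\in I^d:\mathbf F_1^{-1}(u_1)\le\dots\le\mathbf F_d^{-1}(u_d)\}$. For $2\le i\le d$: $\Psi_i^{\mathbf F}=\{s\in\mathbb R:\mathbf F_{i-1}(s)>\mathbf F_i(s)\}$, $\Psi_i^{\delta}=\{s\in(0,1):\delta_{(i-1)}(s)>\delta_{(i)}(s)\}$.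 $L^{\mathbf F}=\{x\in\mathbb R^d:x_1\le\dots\le x_d,\ (x_{i-1},x_i)\subset\Psi_i^{\mathbf F}\ \forall\,2\le i\le d\}$ and $L_{\delta}=\{u\in I^d:(u_{(i-1)},u_{(i)})\subset\Psi_i^{\delta}\ \forall\,2\le i\le d\}$, where $u_{(1)}\le\dots\le u_{(d)}$ are the ordered coordinates of $u$. *)

theory Defs
  imports "HOL-Probability.Probability"
begin

text \<open>Tuples are functions on the index set {1..d}; points of R^d are functions nat => real
  (only coordinates 1..d matter).\<close>

definition is_cdf :: "(real \<Rightarrow> real) \<Rightarrow> bool" where
  "is_cdf J \<longleftrightarrow> mono J \<and> (\<forall>x. continuous (at_right x) J)
     \<and> (J \<longlongrightarrow> 0) at_bot \<and> (J \<longlongrightarrow> 1) at_top"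

definition Fd :: "nat \<Rightarrow> (nat \<Rightarrow> real \<Rightarrow> real) \<Rightarrow> bool" where
  "Fd d F \<longleftrightarrow> (\<forall>i\<in>{1..d}. is_cdf (F i) \<and> continuous_on UNIV (F i))
     \<and> (\<forall>i\<in>{2..d}. \<forall>s. F i s \<le> F (i - 1) s)"

definition Fd0 :: "nat \<Rightarrow> (nat \<Rightarrow> real \<Rightarrow> real) \<Rightarrow> bool" where
  "Fd0 d F \<longleftrightarrow> Fd d F \<and>
     (\<exists>\<mu>. prob_space \<mu> \<and> sets \<mu> = sets (PiM {1..d} (\<lambda>_. lborel))
        \<and> absolutely_continuous (PiM {1..d} (\<lambda>_. lborel)) \<mu>
        \<and> (AE x in \<mu>. \<forall>i\<in>{2..d}. x (i - 1) \<le> x i)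
        \<and> (\<forall>i\<in>{1..d}. \<forall>t. measure \<mu> {x \<in> space \<mu>. x i \<le> t} = F i t))"

definition genInv :: "(real \<Rightarrow> real) \<Rightarrow> real \<Rightarrow> real" where
  "genInv J t = Inf {s. J s \<ge> t}"

definition Gmix :: "nat \<Rightarrow> (nat \<Rightarrow> real \<Rightarrow> real) \<Rightarrow> real \<Rightarrow> real" where
  "Gmix d F s = (\<Sum>i\<in>{1..d}. F i s) / real d"

text \<open>delta_(i) = F_i o G^{-1} on (0,1), extended as a cdf on [0,1] (0 left of 0, 1 from 1 on).\<close>
definition deltaF :: "nat \<Rightarrow> (nat \<Rightarrow> real \<Rightarrow> real) \<Rightarrow> nat \<Rightarrow> real \<Rightarrow> real" where
  "deltaF d F i s = (if s \<le> 0 then 0 else if 1 \<le> s then 1 else F i (genInv (Gmix d F) s))"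

definition TF :: "nat \<Rightarrow> (nat \<Rightarrow> real \<Rightarrow> real) \<Rightarrow> (nat \<Rightarrow> real) set" where
  "TF d F = {u. (\<forall>i\<in>{1..d}. u i \<in> {0..1})
     \<and> (\<forall>i\<in>{2..d}. genInv (F (i - 1)) (u (i - 1)) \<le> genInv (F i) (u i))}"

definition PsiF :: "(nat \<Rightarrow> real \<Rightarrow> real) \<Rightarrow> nat \<Rightarrow> real set" where
  "PsiF F i = {s. F (i - 1) s > F i s}"

definition PsiDelta :: "(nat \<Rightarrow> real \<Rightarrow> real) \<Rightarrow> nat \<Rightarrow> real set" where
  "PsiDelta \<delta> i = {s. 0 < s \<and> s < 1 \<and> \<delta> (i - 1) s > \<delta> i s}"

definition LF :: "nat \<Rightarrow> (nat \<Rightarrow> real \<Rightarrow> real) \<Rightarrow> (nat \<Rightarrow> real) set" where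
  "LF d F = {x. (\<forall>i\<in>{2..d}. x (i - 1) \<le> x i)
     \<and> (\<forall>i\<in>{2..d}. {x (i - 1)<..<x i} \<subseteq> PsiF F i)}"

definition ord_stat :: "nat \<Rightarrow> (nat \<Rightarrow> real) \<Rightarrow> nat \<Rightarrow> real" where
  "ord_stat d u k = sort (map u [1..<d+1]) ! (k - 1)"

definition Ldelta :: "nat \<Rightarrow> (nat \<Rightarrow> real \<Rightarrow> real) \<Rightarrow> (nat \<Rightarrow> real) set" where
  "Ldelta d \<delta> = {u. (\<forall>i\<in>{1..d}. u i \<in> {0..1})
     \<and> (\<forall>i\<in>{2..d}. {ord_stat d u (i - 1)<..<ord_stat d u i} \<subseteq> PsiDelta \<delta> i)}"

end

theory Submission
  imports Defs
begin

text \<open>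
  For almost every \<open>x\<close>, each coordinate \<open>x_i\<close> is the only point of its level set under \<open>F_i\<close>
  and \<open>0 < F_i(x_i) < 1\<close>: a level set of a monotone function with two points is an interval, which
  has \<open>F_i\<close>-mass zero, and a level set of a point failing the condition contains a rational, so
  there are only countably many such level sets. At these regular points
  \<open>F_i\<^sup>-\<^sup>1(F_i(x_i)) = x_i\<close> and \<open>\<delta>_(i)\<^sup>-\<^sup>1(F_i(x_i)) = G(x_i)\<close>, and \<open>G\<close> is strictly increasing there as
  well. Hence \<open>(F_i(x_i))_i \<in> T\<^sup>F\<close> just says that \<open>x\<close> is ordered, and then \<open>G\<close> carries each gap
  \<open>(x_(i-1), x_i)\<close> onto \<open>(G(x_(i-1)), G(x_i))\<close> compatibly with \<open>\<Psi>\<close>, since \<open>\<delta>_(i)(G(y)) = F_i(y)\<close>: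
  every \<open>F_j\<close> is constant wherever \<open>G\<close> is.
\<close>

lemma mono_level_set_subset:
  fixes F :: "real \<Rightarrow> real"
  assumes "mono F"
  shows "{t. F t = c} \<subseteq> (\<Union>p\<in>{p\<in>\<rat>. F p = c}. \<Union>q\<in>{q\<in>\<rat>. F q = c}. {p<..q})
           \<union> {Inf {t. F t = c}, Sup {t. F t = c}}"
proof
  fix t assume t: "t \<in> {t. F t = c}"
  show "t \<in> (\<Union>p\<in>{p\<in>\<rat>. F p = c}. \<Union>q\<in>{q\<in>\<rat>. F q = c}. {p<..q}) \<union> {Inf {t. F t = c}, Sup {t. F t = c}}"
  proof (cases "(\<forall>a. F a = c \<longrightarrow> t \<le> a) \<or> (\<forall>a. F a = c \<longrightarrow> a \<le> t)")
    case True
    then have "Inf {t. F t = c} = t \<or> Sup {t. F t = c} = t"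
      using t cInf_eq_minimum[of t "{t. F t = c}"] cSup_eq_maximum[of t "{t. F t = c}"] by auto
    then show ?thesis by auto
  next
    case False
    then obtain a b where ab: "F a = c" "a < t" "F b = c" "t < b" by (auto simp: not_le)
    obtain p where p: "p \<in> \<rat>" "a < p" "p < t" using Rats_dense_in_real[OF ab(2)] by auto
    obtain q where q: "q \<in> \<rat>" "t < q" "q < b" using Rats_dense_in_real[OF ab(4)] by auto
    have "F a \<le> F p" "F p \<le> F t" "F t \<le> F q" "F q \<le> F b"
      using p q assms by (auto intro: monoD)
    then have "F p = c" "F q = c" using ab t by auto
    then have "p \<in> {p\<in>\<rat>. F p = c}" and "t \<in> (\<Union>q\<in>{q\<in>\<rat>. F q = c}. {p<..q})"
      using p q by (auto intro!: UN_I[of q])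
    then show ?thesis by (rule UnI1[OF UN_I])
  qed
qed

lemma AE_mono_neq_level:
  fixes \<nu> :: "real measure"
  assumes sets: "sets \<nu> = sets borel"
    and countable_null: "\<And>A. countable A \<Longrightarrow> A \<in> null_sets \<nu>"
    and halfline: "\<And>x. emeasure \<nu> {..x} = ennreal (F x)"
    and "mono F"
  shows "AE t in \<nu>. F t \<noteq> c"
proof (rule AE_I')
  have interval_null: "{p<..q} \<in> null_sets \<nu>" if "F p = c" "F q = c" for p q
  proof (cases "p \<le> q")
    case True
    have "{p<..q} = {..q} - {..p}" by auto
    then have "emeasure \<nu> {p<..q} = emeasure \<nu> {..q} - emeasure \<nu> {..p}"
      using True sets by (simp add: emeasure_Diff halfline)
    also have "\<dots> = 0" using that halfline by simp
    finally show ?thesis using sets by (intro null_setsI) auto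
  qed (use sets in auto)
  show "(\<Union>p\<in>{p\<in>\<rat>. F p = c}. \<Union>q\<in>{q\<in>\<rat>. F q = c}. {p<..q})
           \<union> {Inf {t. F t = c}, Sup {t. F t = c}} \<in> null_sets \<nu>"
    by (intro null_sets.Un null_sets_UN' interval_null countable_null countable_Collect countable_rat)
      auto
  show "{t \<in> space \<nu>. \<not> F t \<noteq> c} \<subseteq> (\<Union>p\<in>{p\<in>\<rat>. F p = c}. \<Union>q\<in>{q\<in>\<rat>. F q = c}. {p<..q})
           \<union> {Inf {t. F t = c}, Sup {t. F t = c}}"
    by (rule order_trans[OF _ mono_level_set_subset[OF \<open>mono F\<close>]]) auto
qed

definition regular_point :: "(real \<Rightarrow> real) \<Rightarrow> real \<Rightarrow> bool" where
  "regular_point J t \<longleftrightarrow> 0 < J t \<and> J t < 1 \<and> (\<forall>y. J y = J t \<longrightarrow> y = t)"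

lemma regular_point_if_no_rational_level:
  assumes "mono F" and "\<And>x. 0 \<le> F x" and "\<And>x. F x \<le> 1" and "\<forall>q\<in>\<rat>. F t \<noteq> F q"
  shows "regular_point F t"
proof (rule ccontr)
  assume "\<not> regular_point F t"
  have "\<exists>y. y \<noteq> t \<and> F y = F t"
  proof (cases "F t \<le> 0 \<or> 1 \<le> F t")
    case True
    then consider "F t \<le> 0" | "1 \<le> F t" by blast
    then show ?thesis
    proof cases
      case 1
      then show ?thesis using monoD[OF \<open>mono F\<close>, of "t - 1" t] assms(2)[of "t - 1"]
        by (intro exI[of _ "t - 1"]) auto
    next
      case 2
      then show ?thesis using monoD[OF \<open>mono F\<close>, of t "t + 1"] assms(3)[of "t + 1"]
        by (intro exI[of _ "t + 1"]) auto
    qed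
  next
    case False
    then show ?thesis using \<open>\<not> regular_point F t\<close> unfolding regular_point_def by auto
  qed
  then obtain y where y: "y \<noteq> t" "F y = F t" by auto
  have "min y t < max y t" using y(1) by (simp add: min_def max_def)
  then obtain q where q: "q \<in> \<rat>" "min y t < q" "q < max y t" using Rats_dense_in_real by blast
  have "F (min y t) \<le> F q" "F q \<le> F (max y t)" using q monoD[OF \<open>mono F\<close>] by auto
  then have "F q = F t" using y by (auto simp: min_def max_def split: if_splits)
  then show False using assms(4) q(1) by auto
qed

lemma AE_regular_point:
  assumes "sets \<nu> = sets borel"
    and "\<And>A. countable A \<Longrightarrow> A \<in> null_sets \<nu>"
    and "\<And>x. emeasure \<nu> {..x} = ennreal (F x)"
    and "mono F" and "\<And>x. 0 \<le> F x" and "\<And>x. F x \<le> 1"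
  shows "AE t in \<nu>. regular_point F t"
proof -
  have "AE t in \<nu>. \<forall>q\<in>\<rat>. F t \<noteq> F q"
    using AE_mono_neq_level[OF assms(1-4)] by (intro AE_ball_countable') (auto simp: countable_rat)
  then show ?thesis
    by (rule eventually_mono) (use regular_point_if_no_rational_level assms(4-6) in blast)
qed

lemma cdf_bounds:
  assumes "is_cdf J"
  shows "0 \<le> J x" and "J x \<le> 1"
proof -
  have m: "mono J" and l0: "(J \<longlongrightarrow> 0) at_bot" and l1: "(J \<longlongrightarrow> 1) at_top"
    using assms unfolding is_cdf_def by auto
  have "eventually (\<lambda>y. J y \<le> J x) at_bot"
    unfolding eventually_at_bot_linorder by (auto intro!: exI[of _ x] monoD[OF m])
  then show "0 \<le> J x" using tendsto_le[OF trivial_limit_at_bot_linorder tendsto_const l0] by auto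
  have "eventually (\<lambda>y. J x \<le> J y) at_top"
    unfolding eventually_at_top_linorder by (auto intro!: exI[of _ x] monoD[OF m])
  then show "J x \<le> 1" using tendsto_le[OF trivial_limit_at_top_linorder l1 tendsto_const] by auto
qed

lemma genInv_unique_level:
  assumes "mono J" and "\<forall>y. J y = J t \<longrightarrow> y = t"
  shows "genInv J (J t) = t"
proof -
  have "{y. J t \<le> J y} = {t..}"
  proof (auto intro: monoD[OF assms(1)])
    fix y assume "J t \<le> J y"
    show "t \<le> y"
    proof (rule ccontr)
      assume "\<not> t \<le> y"
      then have "J y \<le> J t" using assms(1) by (auto intro: monoD)
      then have "J y = J t" using \<open>J t \<le> J y\<close> by simp
      then show False using \<open>\<not> t \<le> y\<close> assms(2) by auto
    qed
  qed
  then show ?thesis unfolding genInv_def by simp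
qed

locale continuous_cdf =
  fixes J :: "real \<Rightarrow> real"
  assumes mono: "mono J" and continuous: "continuous_on UNIV J"
    and lim_at_bot: "(J \<longlongrightarrow> 0) at_bot" and lim_at_top: "(J \<longlongrightarrow> 1) at_top"
begin

lemma bdd_below_upper_level: "0 < s \<Longrightarrow> bdd_below {y. s \<le> J y}"
proof -
  assume "0 < s"
  then have "eventually (\<lambda>y. J y < s) at_bot" using order_tendstoD(2)[OF lim_at_bot] by auto
  then obtain b where below: "\<And>y. y \<le> b \<Longrightarrow> J y < s" unfolding eventually_at_bot_linorder by auto
  have "b \<le> y" if "s \<le> J y" for y
  proof (rule ccontr)
    assume "\<not> b \<le> y"
    then have "J y < s" using below by simp
    then show False using that by simp
  qed
  then show ?thesis by (intro bdd_belowI[of _ b]) simp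
qed

lemma le_at_genInv:
  assumes "0 < s" "s < 1"
  shows "s \<le> J (genInv J s)"
proof -
  have "eventually (\<lambda>y. s < J y) at_top" using order_tendstoD(1)[OF lim_at_top] assms by auto
  then obtain y where "s < J y" unfolding eventually_at_top_linorder by auto
  then have "{y. s \<le> J y} \<noteq> {}" by (auto intro: less_imp_le)
  moreover have "closed {y. s \<le> J y}"
    using continuous by (intro closed_Collect_le) (auto intro: continuous_intros)
  ultimately have "Inf {y. s \<le> J y} \<in> {y. s \<le> J y}"
    using bdd_below_upper_level[OF assms(1)] by (intro closed_contains_Inf) auto
  then show ?thesis by (simp add: genInv_def)
qed

lemma genInv_le: "0 < s \<Longrightarrow> s \<le> J y \<Longrightarrow> genInv J s \<le> y"
  unfolding genInv_def by (rule cInf_lower) (use bdd_below_upper_level in auto)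

lemma genInv_less:
  assumes "0 < s" "s < J b"
  shows "genInv J s < b"
proof -
  have "open {y. s < J y}" using continuous by (intro open_Collect_less) (auto intro: continuous_intros)
  then obtain e where e: "e > 0" "ball b e \<subseteq> {y. s < J y}" using assms(2) by (auto simp: open_contains_ball)
  then have "s < J (b - e/2)" by (auto simp: dist_real_def subset_iff)
  then have "genInv J s \<le> b - e/2" using genInv_le assms(1) by (auto intro: less_imp_le)
  then show ?thesis using e(1) by auto
qed

end

lemma Fd_cdf: "Fd d F \<Longrightarrow> i \<in> {1..d} \<Longrightarrow> is_cdf (F i)"
  and Fd_continuous: "Fd d F \<Longrightarrow> i \<in> {1..d} \<Longrightarrow> continuous_on UNIV (F i)"
  unfolding Fd_def by auto

lemma Fd_mono: "Fd d F \<Longrightarrow> i \<in> {1..d} \<Longrightarrow> mono (F i)"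
  using Fd_cdf unfolding is_cdf_def by auto

lemma continuous_cdf_Gmix:
  assumes F: "Fd d F" and d: "1 \<le> d"
  shows "continuous_cdf (Gmix d F)"
proof
  show "mono (Gmix d F)" unfolding Gmix_def mono_def
    by (auto intro!: divide_right_mono sum_mono monoD[OF Fd_mono[OF F]])
  show "continuous_on UNIV (Gmix d F)" unfolding Gmix_def[abs_def]
    using Fd_continuous[OF F] d by (intro continuous_intros) auto
  have "((\<lambda>s. (\<Sum>i\<in>{1..d}. F i s) / real d) \<longlongrightarrow> (\<Sum>i\<in>{1..d}. 0) / real d) at_bot"
    using Fd_cdf[OF F] d unfolding is_cdf_def by (intro tendsto_intros) auto
  then show "(Gmix d F \<longlongrightarrow> 0) at_bot" unfolding Gmix_def[abs_def] by simp
  have "((\<lambda>s. (\<Sum>i\<in>{1..d}. F i s) / real d) \<longlongrightarrow> (\<Sum>i\<in>{1..d}. 1) / real d) at_top"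
    using Fd_cdf[OF F] d unfolding is_cdf_def by (intro tendsto_intros) auto
  then show "(Gmix d F \<longlongrightarrow> 1) at_top" unfolding Gmix_def[abs_def] using d by simp
qed

lemma Gmix_eq_imp_eq:
  assumes F: "Fd d F" and j: "j \<in> {1..d}" and "y \<le> z" and "Gmix d F y = Gmix d F z"
  shows "F j y = F j z"
proof -
  have nonneg: "\<forall>k\<in>{1..d}. 0 \<le> F k z - F k y"
    using \<open>y \<le> z\<close> by (auto intro!: monoD[OF Fd_mono[OF F]])
  have "(\<Sum>k\<in>{1..d}. F k z - F k y) = (\<Sum>k\<in>{1..d}. F k z) - (\<Sum>k\<in>{1..d}. F k y)"
    by (simp add: sum_subtractf)
  also have "\<dots> = 0" using assms(4) j unfolding Gmix_def by (simp add: divide_cancel_right)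
  finally have "\<forall>k\<in>{1..d}. F k z - F k y = 0"
    using nonneg sum_nonneg_eq_0_iff[of "{1..d}" "\<lambda>k. F k z - F k y"] by (simp del: atLeastAtMost_iff)
  then show ?thesis using j by auto
qed

lemma Gmix_unique_level:
  assumes F: "Fd d F" and i: "i \<in> {1..d}" and unique: "\<forall>y. F i y = F i t \<longrightarrow> y = t"
  shows "\<forall>y. Gmix d F y = Gmix d F t \<longrightarrow> y = t"
proof (intro allI impI)
  fix y assume eq: "Gmix d F y = Gmix d F t"
  have "F i y = F i t"
  proof (cases "y \<le> t")
    case True
    then show ?thesis using Gmix_eq_imp_eq[OF F i _ eq] by blast
  next
    case False
    then show ?thesis using Gmix_eq_imp_eq[OF F i _ eq[symmetric]] by simp
  qed
  then show "y = t" using unique by blast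
qed

lemma Gmix_bounds:
  assumes F: "Fd d F" and i: "i \<in> {1..d}"
  shows "0 < F i t \<Longrightarrow> 0 < Gmix d F t" and "F i t < 1 \<Longrightarrow> Gmix d F t < 1"
    and "0 \<le> Gmix d F t" and "Gmix d F t \<le> 1"
proof -
  have d: "0 < real d" using i by auto
  have b: "\<And>j. j \<in> {1..d} \<Longrightarrow> 0 \<le> F j t \<and> F j t \<le> 1" using cdf_bounds Fd_cdf[OF F] by auto
  have "0 \<le> (\<Sum>j\<in>{1..d}. F j t)" using b by (intro sum_nonneg) auto
  then show "0 \<le> Gmix d F t" unfolding Gmix_def by auto
  have "(\<Sum>j\<in>{1..d}. F j t) \<le> (\<Sum>j\<in>{1..d}. 1)" using b by (intro sum_mono) auto
  then show "Gmix d F t \<le> 1" unfolding Gmix_def using d by auto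
  show "0 < Gmix d F t" if "0 < F i t"
  proof -
    have "(\<Sum>j\<in>{1..d}. 0) < (\<Sum>j\<in>{1..d}. F j t)"
      using i that b by (intro sum_strict_mono_ex1) auto
    then show ?thesis unfolding Gmix_def using d by auto
  qed
  show "Gmix d F t < 1" if "F i t < 1"
  proof -
    have "(\<Sum>j\<in>{1..d}. F j t) < (\<Sum>j\<in>{1..d}. 1)"
      using i that b by (intro sum_strict_mono_ex1) auto
    then show ?thesis unfolding Gmix_def using d by auto
  qed
qed

lemma genInv_deltaF:
  assumes F: "Fd d F" and i: "i \<in> {1..d}" and t: "regular_point (F i) t"
  shows "genInv (deltaF d F i) (F i t) = Gmix d F t"
proof -
  interpret G: continuous_cdf "Gmix d F" using continuous_cdf_Gmix[OF F] i by auto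
  have Gt: "0 < Gmix d F t" "Gmix d F t < 1"
    using Gmix_bounds[OF F i] t unfolding regular_point_def by auto
  have "genInv (Gmix d F) (Gmix d F t) = t"
    using genInv_unique_level[OF G.mono Gmix_unique_level[OF F i]] t unfolding regular_point_def by auto
  then have attained: "F i t \<le> deltaF d F i (Gmix d F t)" unfolding deltaF_def using Gt by auto
  have least: "Gmix d F t \<le> s" if s: "F i t \<le> deltaF d F i s" for s
  proof (rule ccontr)
    assume "\<not> Gmix d F t \<le> s"
    then have "s < Gmix d F t" by auto
    moreover have "0 < s"
      using s t unfolding deltaF_def regular_point_def by (simp split: if_splits)
    ultimately have "genInv (Gmix d F) s < t" using G.genInv_less by blast
    moreover from this have "F i (genInv (Gmix d F) s) \<noteq> F i t"
      using t unfolding regular_point_def by force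
    ultimately have "F i (genInv (Gmix d F) s) < F i t"
      using monoD[OF Fd_mono[OF F i], of "genInv (Gmix d F) s" t] by simp
    then show False using s \<open>0 < s\<close> \<open>s < Gmix d F t\<close> Gt unfolding deltaF_def by auto
  qed
  show ?thesis unfolding genInv_def by (rule cInf_eq_minimum) (use attained least in auto)
qed

lemma gap_subset_PsiF_iff_PsiDelta:
  assumes F: "Fd d F" and i: "i \<in> {2..d}" and "a \<le> b"
    and a: "regular_point (F (i - 1)) a" and b: "regular_point (F i) b"
  shows "{a<..<b} \<subseteq> PsiF F i \<longleftrightarrow> {Gmix d F a<..<Gmix d F b} \<subseteq> PsiDelta (deltaF d F) i"
proof -
  have i1: "i - 1 \<in> {1..d}" and i2: "i \<in> {1..d}" using i by auto
  interpret G: continuous_cdf "Gmix d F" using continuous_cdf_Gmix[OF F] i by auto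
  let ?G = "Gmix d F"
  have unique_a: "\<forall>y. ?G y = ?G a \<longrightarrow> y = a"
    using Gmix_unique_level[OF F i1] a unfolding regular_point_def by blast
  have unique_b: "\<forall>y. ?G y = ?G b \<longrightarrow> y = b"
    using Gmix_unique_level[OF F i2] b unfolding regular_point_def by blast
  have Ga: "0 < ?G a" using Gmix_bounds(1)[OF F i1] a unfolding regular_point_def by blast
  have Gb: "?G b < 1" using Gmix_bounds(2)[OF F i2] b unfolding regular_point_def by blast
  have delta: "deltaF d F j s = F j (genInv ?G s)" if "0 < s" "s < 1" for j s
    using that unfolding deltaF_def by simp
  show ?thesis
  proof
    assume gap: "{a<..<b} \<subseteq> PsiF F i"
    show "{?G a<..<?G b} \<subseteq> PsiDelta (deltaF d F) i"
    proof
      fix s assume s: "s \<in> {?G a<..<?G b}"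
      then have s01: "0 < s" "s < 1" using Ga Gb by auto
      let ?y = "genInv ?G s"
      have "?G a < ?G ?y" using G.le_at_genInv[OF s01] s by simp
      then have "a < ?y" using monoD[OF G.mono, of ?y a] by force
      moreover have "?y < b" using G.genInv_less[OF s01(1)] s by simp
      ultimately have "?y \<in> PsiF F i" using gap by auto
      then show "s \<in> PsiDelta (deltaF d F) i"
        unfolding PsiF_def PsiDelta_def using s01 delta by simp
    qed
  next
    assume gap: "{?G a<..<?G b} \<subseteq> PsiDelta (deltaF d F) i"
    show "{a<..<b} \<subseteq> PsiF F i"
    proof
      fix y assume y: "y \<in> {a<..<b}"
      have "?G a \<le> ?G y" "?G y \<le> ?G b" using y monoD[OF G.mono] by auto
      moreover have "?G a \<noteq> ?G y" "?G y \<noteq> ?G b" using unique_a unique_b y by force+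
      ultimately have "?G y \<in> PsiDelta (deltaF d F) i" using gap by auto
      then have G01: "0 < ?G y" "?G y < 1"
        and psi: "F i (genInv ?G (?G y)) < F (i - 1) (genInv ?G (?G y))"
        unfolding PsiDelta_def using delta by auto
      let ?y = "genInv ?G (?G y)"
      have "?y \<le> y" using G.genInv_le[OF G01(1)] by simp
      moreover have "?G ?y = ?G y"
        using G.le_at_genInv[OF G01] monoD[OF G.mono \<open>?y \<le> y\<close>] by simp
      ultimately have "F j ?y = F j y" if "j \<in> {1..d}" for j
        using Gmix_eq_imp_eq[OF F that] by blast
      then show "y \<in> PsiF F i" using psi i1 i2 unfolding PsiF_def by simp
    qed
  qed
qed

lemma ord_stat_ascending:
  fixes u :: "nat \<Rightarrow> real"
  assumes ascending: "\<forall>i\<in>{2..d}. u (i - 1) \<le> u i" and k: "k \<in> {1..d}"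
  shows "ord_stat d u k = u k"
proof -
  have nth: "map u [1..<d+1] ! j = u (Suc j)" if "j < d" for j
    using that by (simp del: upt_Suc)
  have "sorted (map u [1..<d+1])"
    unfolding sorted_iff_nth_Suc
  proof (intro allI impI)
    fix j assume "Suc j < length (map u [1..<d+1])"
    then have "Suc j < d" by (simp del: upt_Suc)
    then show "map u [1..<d+1] ! j \<le> map u [1..<d+1] ! Suc j"
      using ascending[rule_format, of "Suc (Suc j)"] nth by simp
  qed
  then have "sort (map u [1..<d+1]) = map u [1..<d+1]" by (rule sorted_sort_id)
  then show ?thesis unfolding ord_stat_def using k nth[of "k - 1"] by auto
qed

lemma TF_iff_ascending:
  assumes F: "Fd d F" and x: "\<forall>i\<in>{1..d}. regular_point (F i) (x i)"
  shows "(\<lambda>i. F i (x i)) \<in> TF d F \<longleftrightarrow> (\<forall>i\<in>{2..d}. x (i - 1) \<le> x i)"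
proof -
  have inv: "genInv (F i) (F i (x i)) = x i" if "i \<in> {1..d}" for i
    using genInv_unique_level[OF Fd_mono[OF F that]] x that unfolding regular_point_def by blast
  have "F i (x i) \<in> {0..1}" if "i \<in> {1..d}" for i
    using cdf_bounds[OF Fd_cdf[OF F that]] by simp
  moreover have "genInv (F (i - 1)) (F (i - 1) (x (i - 1))) \<le> genInv (F i) (F i (x i))
      \<longleftrightarrow> x (i - 1) \<le> x i" if "i \<in> {2..d}" for i
  proof -
    have "i - 1 \<in> {1..d}" "i \<in> {1..d}" using that by auto
    then show ?thesis using inv by simp
  qed
  ultimately show ?thesis unfolding TF_def by simp
qed

lemma Ldelta_iff_LF:
  assumes F: "Fd d F" and x: "\<forall>i\<in>{1..d}. regular_point (F i) (x i)"
    and ascending: "\<forall>i\<in>{2..d}. x (i - 1) \<le> x i"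
  shows "(\<lambda>i. genInv (deltaF d F i) (F i (x i))) \<in> Ldelta d (deltaF d F) \<longleftrightarrow> x \<in> LF d F"
proof -
  define u where "u i = genInv (deltaF d F i) (F i (x i))" for i
  have u: "u i = Gmix d F (x i)" if "i \<in> {1..d}" for i
    unfolding u_def using genInv_deltaF[OF F that] x that by blast
  have "u (i - 1) \<le> u i" if "i \<in> {2..d}" for i
  proof -
    have "i - 1 \<in> {1..d}" "i \<in> {1..d}" using that by auto
    then show ?thesis using u that ascending monoD[OF continuous_cdf.mono[OF continuous_cdf_Gmix[OF F]]]
      by simp
  qed
  then have ord_stat: "ord_stat d u k = u k" if "k \<in> {1..d}" for k
    using ord_stat_ascending that by blast
  have gap: "{ord_stat d u (i - 1)<..<ord_stat d u i} = {Gmix d F (x (i - 1))<..<Gmix d F (x i)}"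
    if "i \<in> {2..d}" for i
  proof -
    have "i - 1 \<in> {1..d}" "i \<in> {1..d}" using that by auto
    then show ?thesis using ord_stat u by simp
  qed
  have "\<forall>i\<in>{1..d}. u i \<in> {0..1}"
    using u Gmix_bounds(3,4)[OF F] by simp
  moreover have "(\<forall>i\<in>{2..d}. {ord_stat d u (i - 1)<..<ord_stat d u i} \<subseteq> PsiDelta (deltaF d F) i)
      \<longleftrightarrow> (\<forall>i\<in>{2..d}. {Gmix d F (x (i - 1))<..<Gmix d F (x i)} \<subseteq> PsiDelta (deltaF d F) i)"
    by (intro ball_cong refl) (simp only: gap)
  ultimately have "u \<in> Ldelta d (deltaF d F)
      \<longleftrightarrow> (\<forall>i\<in>{2..d}. {Gmix d F (x (i - 1))<..<Gmix d F (x i)} \<subseteq> PsiDelta (deltaF d F) i)"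
    unfolding Ldelta_def mem_Collect_eq by blast
  also have "\<dots> \<longleftrightarrow> (\<forall>i\<in>{2..d}. {x (i - 1)<..<x i} \<subseteq> PsiF F i)"
  proof (intro ball_cong refl)
    fix i assume i: "i \<in> {2..d}"
    then have "i - 1 \<in> {1..d}" "i \<in> {1..d}" by auto
    then have "regular_point (F (i - 1)) (x (i - 1))" "regular_point (F i) (x i)" using x by blast+
    moreover have "x (i - 1) \<le> x i" using ascending i by blast
    ultimately show "{Gmix d F (x (i - 1))<..<Gmix d F (x i)} \<subseteq> PsiDelta (deltaF d F) i
        \<longleftrightarrow> {x (i - 1)<..<x i} \<subseteq> PsiF F i"
      using gap_subset_PsiF_iff_PsiDelta[OF F i] by blast
  qed
  also have "\<dots> \<longleftrightarrow> x \<in> LF d F" using ascending unfolding LF_def by simp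
  finally show ?thesis unfolding u_def .
qed

lemma indicator_TF_Ldelta_eq_indicator_LF:
  assumes F: "Fd d F" and x: "\<forall>i\<in>{1..d}. regular_point (F i) (x i)"
  shows "indicator (TF d F) (\<lambda>i. F i (x i))
           * indicator (Ldelta d (deltaF d F)) (\<lambda>i. genInv (deltaF d F i) (F i (x i)))
           = (indicator (LF d F) x :: real)"
proof (cases "\<forall>i\<in>{2..d}. x (i - 1) \<le> x i")
  case True
  then show ?thesis
    using TF_iff_ascending[OF F x] Ldelta_iff_LF[OF F x True] by (simp add: indicator_def)
next
  case False
  then have "x \<notin> LF d F" unfolding LF_def by blast
  then show ?thesis using TF_iff_ascending[OF F x] False by simp
qed

lemma AE_PiM_component:
  fixes R :: "real \<Rightarrow> bool"
  assumes "finite I" and "i \<in> I" and "AE t in lborel. R t"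
  shows "AE x in PiM I (\<lambda>_. lborel). R (x i)"
proof -
  interpret product_sigma_finite "\<lambda>_::'a. lborel :: real measure" by unfold_locales
  from assms(3) obtain N where N: "{t \<in> space lborel. \<not> R t} \<subseteq> N" "N \<in> null_sets lborel"
    unfolding eventually_ae_filter by auto
  define B where "B = Pi\<^sub>E I (\<lambda>j. if j = i then N else UNIV)"
  have "emeasure (PiM I (\<lambda>_. lborel)) B = (\<Prod>j\<in>I. emeasure lborel (if j = i then N else UNIV))"
    unfolding B_def using N(2) assms(1) by (intro emeasure_PiM) auto
  also have "\<dots> = 0" using assms(1,2) N(2) by (intro prod_zero) auto
  finally have "B \<in> null_sets (PiM I (\<lambda>_. lborel))"
    unfolding B_def using N(2) assms(1) by (intro null_setsI) (auto intro!: sets_PiM_I_finite)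
  moreover have "{x \<in> space (PiM I (\<lambda>_. lborel)). \<not> R (x i)} \<subseteq> B"
    using N(1) assms(2) by (auto simp: B_def space_PiM PiE_iff extensional_def)
  ultimately show ?thesis by (rule AE_I')
qed

lemma AE_regular_coordinates:
  fixes f :: "nat \<Rightarrow> real \<Rightarrow> real"
  assumes F: "Fd d F"
    and f: "\<forall>i\<in>{1..d}. f i \<in> borel_measurable borel \<and> (\<forall>t. 0 \<le> f i t)
              \<and> (\<forall>x. emeasure (density lborel (f i)) {..x} = ennreal (F i x))"
  shows "AE x in PiM {1..d} (\<lambda>_. lborel). \<forall>i\<in>{1..d}. 0 < f i (x i) \<longrightarrow> regular_point (F i) (x i)"
proof (rule AE_finite_allI)
  fix i assume i: "i \<in> {1..d}"
  have f_meas: "(\<lambda>t. ennreal (f i t)) \<in> borel_measurable lborel" using f i by auto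
  have "AE t in density lborel (f i). regular_point (F i) t"
  proof (rule AE_regular_point)
    show "A \<in> null_sets (density lborel (f i))" if "countable A" for A
      using countable_imp_null_set_lborel[OF that] AE_not_in[OF countable_imp_null_set_lborel[OF that]]
      unfolding null_sets_density_iff[OF f_meas] by (auto elim: AE_mp)
    show "emeasure (density lborel (f i)) {..x} = ennreal (F i x)" for x using f i by blast
    show "mono (F i)" using Fd_mono[OF F i] .
    show "0 \<le> F i x" "F i x \<le> 1" for x using cdf_bounds[OF Fd_cdf[OF F i]] by auto
  qed simp
  then have "AE t in lborel. 0 < f i t \<longrightarrow> regular_point (F i) t"
    using AE_density[OF f_meas] by simp
  then show "AE x in PiM {1..d} (\<lambda>_. lborel). 0 < f i (x i) \<longrightarrow> regular_point (F i) (x i)"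
    using AE_PiM_component[OF _ i] by simp
qed simp

theorem mainTheorem18:
  fixes d :: nat and F f :: "nat \<Rightarrow> real \<Rightarrow> real"
  assumes "Fd0 d F"
    and "\<forall>i\<in>{1..d}. f i \<in> borel_measurable borel \<and> (\<forall>t. 0 \<le> f i t)
           \<and> (\<forall>x. emeasure (density lborel (f i)) {..x} = ennreal (F i x))"
  shows "AE x in density (PiM {1..d} (\<lambda>_. lborel)) (\<lambda>x. \<Prod>i\<in>{1..d}. ennreal (f i (x i))).
           indicator (TF d F) (\<lambda>i. F i (x i))
           * indicator (Ldelta d (deltaF d F)) (\<lambda>i. genInv (deltaF d F i) (F i (x i)))
           = (indicator (LF d F) x :: real)"
proof -
  have F: "Fd d F" using assms(1) unfolding Fd0_def by blast
  have density_meas: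
    "(\<lambda>x. \<Prod>i\<in>{1..d}. ennreal (f i (x i))) \<in> borel_measurable (PiM {1..d} (\<lambda>_. lborel))"
    using assms(2)
    by (auto intro!: borel_measurable_prod_ennreal measurable_compose[OF measurable_component_singleton])
  show ?thesis
    unfolding AE_density[OF density_meas]
  proof (rule eventually_mono[OF AE_regular_coordinates[OF F assms(2)]], intro impI)
    fix x assume regular: "\<forall>i\<in>{1..d}. 0 < f i (x i) \<longrightarrow> regular_point (F i) (x i)"
      and density_pos: "0 < (\<Prod>i\<in>{1..d}. ennreal (f i (x i)))"
    have "0 < f i (x i)" if i: "i \<in> {1..d}" for i
    proof (rule ccontr)
      assume "\<not> 0 < f i (x i)"
      then have "ennreal (f i (x i)) = 0" by (simp add: ennreal_eq_0_iff)
      then have "(\<Prod>i\<in>{1..d}. ennreal (f i (x i))) = 0" using i by (intro prod_zero) auto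
      then show False using density_pos by (metis less_irrefl)
    qed
    then show "indicator (TF d F) (\<lambda>i. F i (x i))
           * indicator (Ldelta d (deltaF d F)) (\<lambda>i. genInv (deltaF d F i) (F i (x i)))
           = (indicator (LF d F) x :: real)"
      using regular by (intro indicator_TF_Ldelta_eq_indicator_LF[OF F]) blast
  qed
qed

end
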